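(* Let $0<a<1$ and $b>0$. For every $u>0$, $$\pi_{\rm RSB}(u;a,b)=\frac{1}{B(a,b)}\int_{(0,\infty)^3} e^{-vu}\,\frac{v^{x+y}e^{-v}}{\Gamma(x+y+1)}\,\frac{x^{-a}}{\Gamma(1-a)}\,\frac{y^{a+b-1}e^{-y}}{\Gamma(a+b)}\,dv\,dx\,dy =\int_{(0,\infty)^3}\mathrm{Ex}(u\mid v)\,\mathrm{Ga}(v\mid x+y,1)\,g(x,y)\,dv\,dx\,dy,$$ where $$g(x,y)=\frac{1}{B(a,b)\Gamma(1-a)\Gamma(a+b)}\,\frac{x^{-a}y^{a+b-1}e^{-y}}{x+y},\qquad x,y>0.$$
   Context: For $a,b>0$, the rescaled beta (RSB) density is $\pi_{\rm RSB}(u;a,b)=\frac{1}{B(a,b)}\frac{\{\log(1+u)\}^{a-1}}{1+u}\frac{1}{\{1+\log(1+u)\}^{a+b}}$ for $u>0$, where $B$ is the beta function. $\mathrm{Ex}(u\mid v)=ve^{-vu}$ denotes the exponential density with rate $v$, and $\mathrm{Ga}(v\mid\alpha,\beta)=\beta^\alpha v^{\alpha-1}e^{-\beta v}/\Gamma(\alpha)$ denotes the gamma density with shape $\alpha$ and rate $\beta$. *)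

theory Defs
  imports "HOL-Analysis.Analysis"
begin

definition RSB_density :: "real \<Rightarrow> real \<Rightarrow> real \<Rightarrow> real" where
  "RSB_density a b u = (1 / Beta a b) * (ln (1 + u)) powr (a - 1) / (1 + u)
       * (1 / (1 + ln (1 + u)) powr (a + b))"

definition Ex_density :: "real \<Rightarrow> real \<Rightarrow> real" where
  "Ex_density u v = v * exp (- v * u)"

definition Ga_density :: "real \<Rightarrow> real \<Rightarrow> real \<Rightarrow> real" where
  "Ga_density v \<alpha> \<beta> = \<beta> powr \<alpha> * v powr (\<alpha> - 1) * exp (- \<beta> * v) / Gamma \<alpha>"

definition g_mix :: "real \<Rightarrow> real \<Rightarrow> real \<Rightarrow> real \<Rightarrow> real" where
  "g_mix a b x y = 1 / (Beta a b * Gamma (1 - a) * Gamma (a + b))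
       * (x powr (- a) * y powr (a + b - 1) * exp (- y)) / (x + y)"

end

theory Submission
  imports Defs
begin

text \<open>Integrating out v first turns e^{-vu} v^{x+y} e^{-v} / \<Gamma>(x+y+1) into
(1+u)^{-(x+y+1)} = e^{-Lx} e^{-Ly} / (1+u) with L = log(1+u). The remaining integrand
factorises, and the x- and y-integrals are Gamma integrals, equal to \<Gamma>(1-a) L^{a-1} and
\<Gamma>(a+b) (1+L)^{-(a+b)}. The integrand is nonnegative, so Tonelli's theorem justifies the
iterated integration and integrability comes for free. The second representation is the same
integrand divided by B(a,b), by \<Gamma>(x+y+1) = (x+y) \<Gamma>(x+y).\<close>

lemma borel_measurable_Gamma_real [measurable]:
  "(Gamma :: real \<Rightarrow> real) \<in> borel_measurable borel"
proof -
  have [measurable]: "(rGamma :: real \<Rightarrow> real) \<in> borel_measurable borel"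
    by (rule borel_measurable_continuous_onI[OF continuous_on_rGamma])
  show ?thesis unfolding Gamma_def by measurable
qed

lemma nn_integral_lborel_pair:
  fixes f :: "'a::euclidean_space \<times> 'b::euclidean_space \<Rightarrow> ennreal"
  assumes [measurable]: "f \<in> borel_measurable borel"
  shows "(\<integral>\<^sup>+p. f p \<partial>lborel) = (\<integral>\<^sup>+y. \<integral>\<^sup>+x. f (x, y) \<partial>lborel \<partial>lborel)"
  by (subst lborel_prod[symmetric], rule lborel_pair.nn_integral_snd[symmetric])
     (simp add: lborel_prod)

lemma nn_integral_lborel_pair_mult:
  fixes f :: "'a::euclidean_space \<Rightarrow> ennreal" and g :: "'b::euclidean_space \<Rightarrow> ennreal"
  assumes [measurable]: "f \<in> borel_measurable borel" "g \<in> borel_measurable borel"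
  shows "(\<integral>\<^sup>+p. f (fst p) * g (snd p) \<partial>lborel) = (\<integral>\<^sup>+x. f x \<partial>lborel) * (\<integral>\<^sup>+y. g y \<partial>lborel)"
proof -
  have [measurable]: "(\<lambda>p. f (fst p) * g (snd p)) \<in> borel_measurable (borel :: ('a \<times> 'b) measure)"
    by (simp add: borel_prod[symmetric])
  have "(\<integral>\<^sup>+p. f (fst p) * g (snd p) \<partial>lborel) = (\<integral>\<^sup>+y. (\<integral>\<^sup>+x. f x \<partial>lborel) * g y \<partial>lborel)"
    by (subst nn_integral_lborel_pair) (simp_all add: nn_integral_multc)
  also have "\<dots> = (\<integral>\<^sup>+x. f x \<partial>lborel) * (\<integral>\<^sup>+y. g y \<partial>lborel)"
    by (simp add: nn_integral_cmult)
  finally show ?thesis .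
qed

lemma nn_integral_powr_exp_eq_Gamma:
  fixes s c :: real
  assumes s: "s > 0" and c: "c > 0"
  shows "(\<integral>\<^sup>+t. ennreal (indicator {0<..} t * t powr (s - 1) * exp (- c * t)) \<partial>lborel)
          = ennreal (Gamma s / c powr s)"
proof -
  define f where "f t = ennreal (indicator {0<..} t * t powr (s - 1) * exp (- t))" for t :: real
  define I where "I = (\<integral>\<^sup>+t. ennreal (indicator {0<..} t * t powr (s - 1) * exp (- c * t)) \<partial>lborel)"
  have [measurable]: "f \<in> borel_measurable borel"
    unfolding f_def by measurable
  have "ennreal (Gamma s) = (\<integral>\<^sup>+t. f t \<partial>lborel)"
    unfolding Gamma_conv_nn_integral_real[OF s] f_def
    by (intro nn_integral_cong) (auto simp: indicator_def exp_minus field_simps)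
  also have "\<dots> = ennreal c * (\<integral>\<^sup>+t. f (0 + c * t) \<partial>lborel)"
    using nn_integral_real_affine[of f c 0] c by simp
  also have "(\<integral>\<^sup>+t. f (0 + c * t) \<partial>lborel) = ennreal (c powr (s - 1)) * I"
    unfolding I_def f_def using c
    by (subst nn_integral_cmult[symmetric], measurable, intro nn_integral_cong)
       (auto simp: indicator_def powr_mult ennreal_mult' [symmetric] zero_less_mult_iff)
  also have "ennreal c * (ennreal (c powr (s - 1)) * I) = ennreal (c powr s) * I"
    using c by (simp add: ennreal_mult[symmetric] mult.assoc[symmetric] powr_diff)
  finally have "ennreal (Gamma s) = ennreal (c powr s) * I" .
  then have "I = ennreal (Gamma s) / ennreal (c powr s)"
    using c by (simp add: ennreal_mult_divide_eq mult.commute)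
  then show ?thesis
    unfolding I_def using c s by (simp add: divide_ennreal)
qed

lemma nn_integral_cmult_powr_exp_eq_Gamma:
  fixes s c k :: real
  assumes "s > 0" "c > 0" "k \<ge> 0"
  shows "(\<integral>\<^sup>+t. ennreal (k * (indicator {0<..} t * t powr (s - 1) * exp (- c * t))) \<partial>lborel)
          = ennreal (k * (Gamma s / c powr s))"
proof -
  have "(\<integral>\<^sup>+t. ennreal (k * (indicator {0<..} t * t powr (s - 1) * exp (- c * t))) \<partial>lborel)
      = ennreal k * (\<integral>\<^sup>+t. ennreal (indicator {0<..} t * t powr (s - 1) * exp (- c * t)) \<partial>lborel)"
    using assms(3) by (subst nn_integral_cmult[symmetric]) (auto simp: ennreal_mult')
  also have "\<dots> = ennreal k * ennreal (Gamma s / c powr s)"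
    using assms by (simp only: nn_integral_powr_exp_eq_Gamma)
  finally show ?thesis
    using assms by (simp add: ennreal_mult'[symmetric])
qed

lemma sets_borel_positive_octant [measurable]:
  "{0<..} \<times> {0<..} \<times> {0<..} \<in> sets (borel :: (real \<times> real \<times> real) measure)"
  by (intro borel_open open_Times open_greaterThan)

definition RSB_mixture_integrand :: "real \<Rightarrow> real \<Rightarrow> real \<Rightarrow> real \<times> real \<times> real \<Rightarrow> real" where
  "RSB_mixture_integrand a b u = (\<lambda>(v, x, y).
     exp (- v * u) * (v powr (x + y) * exp (- v) / Gamma (x + y + 1))
     * (x powr (- a) / Gamma (1 - a))
     * (y powr (a + b - 1) * exp (- y) / Gamma (a + b)))"

lemma borel_measurable_RSB_mixture_integrand [measurable]:
  "RSB_mixture_integrand a b u \<in> borel_measurable borel"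
  unfolding RSB_mixture_integrand_def by (simp add: borel_prod[symmetric])

lemma RSB_mixture_integrand_nonneg:
  assumes "a < 1" "0 < a + b" "0 < v" "0 < x" "0 < y"
  shows "0 \<le> RSB_mixture_integrand a b u (v, x, y)"
  using assms by (simp add: RSB_mixture_integrand_def)

lemma nn_integral_RSB_mixture_integrand_fst:
  fixes a b u x y :: real
  assumes ab: "a < 1" "0 < a + b" and u: "-1 < u" and xy: "0 < x" "0 < y"
  shows "(\<integral>\<^sup>+v. ennreal (indicator {0<..} v * RSB_mixture_integrand a b u (v, x, y)) \<partial>lborel)
     = ennreal (x powr - a * exp (- ln (1 + u) * x) / ((1 + u) * Gamma (1 - a)))
       * ennreal (y powr (a + b - 1) * exp (- (1 + ln (1 + u)) * y) / Gamma (a + b))"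
proof -
  define c where "c = 1 + u"
  define L where "L = ln c"
  have c: "0 < c" unfolding c_def using u by simp
  define k where "k = x powr (- a) / Gamma (1 - a) * (y powr (a + b - 1) * exp (- y) / Gamma (a + b))
                        / Gamma (x + y + 1)"
  have k: "0 \<le> k" unfolding k_def using ab xy by simp
  have "(\<integral>\<^sup>+v. ennreal (indicator {0<..} v * RSB_mixture_integrand a b u (v, x, y)) \<partial>lborel)
      = (\<integral>\<^sup>+v. ennreal (k * (indicator {0<..} v * v powr ((x + y + 1) - 1) * exp (- c * v))) \<partial>lborel)"
    unfolding k_def c_def RSB_mixture_integrand_def
    by (intro nn_integral_cong) (auto simp: indicator_def exp_diff exp_minus field_simps)
  also have "\<dots> = ennreal (k * (Gamma (x + y + 1) / c powr (x + y + 1)))"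
    using xy c k by (intro nn_integral_cmult_powr_exp_eq_Gamma) auto
  also have "c powr (x + y + 1) = c * exp (L * x) * exp (L * y)"
  proof -
    have "c powr (x + y + 1) = exp ((x + y + 1) * L)"
      using c by (simp add: powr_def L_def)
    also have "\<dots> = exp L * exp (L * x) * exp (L * y)"
      by (simp add: exp_add[symmetric] algebra_simps)
    also have "exp L = c"
      using c by (simp add: L_def)
    finally show ?thesis .
  qed
  also have "k * (Gamma (x + y + 1) / (c * exp (L * x) * exp (L * y)))
      = x powr - a * exp (- L * x) / (c * Gamma (1 - a))
        * (y powr (a + b - 1) * exp (- (1 + L) * y) / Gamma (a + b))"
  proof -
    have "Gamma (x + y + 1) \<noteq> 0" "Gamma (1 - a) \<noteq> 0" "Gamma (a + b) \<noteq> 0"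
      using xy ab by (auto simp: Gamma_real_pos[THEN less_imp_not_eq2])
    then show ?thesis
      unfolding k_def using c by (simp add: exp_minus exp_diff field_simps)
  qed
  also have "ennreal (x powr - a * exp (- L * x) / (c * Gamma (1 - a))
        * (y powr (a + b - 1) * exp (- (1 + L) * y) / Gamma (a + b)))
      = ennreal (x powr - a * exp (- L * x) / (c * Gamma (1 - a)))
        * ennreal (y powr (a + b - 1) * exp (- (1 + L) * y) / Gamma (a + b))"
    using xy ab c by (intro ennreal_mult') simp
  finally show ?thesis
    unfolding L_def c_def .
qed

lemma nn_integral_RSB_mixture_integrand:
  fixes a b u :: real
  assumes ab: "a < 1" "0 < a + b" and u: "0 < u"
  shows "(\<integral>\<^sup>+p. ennreal (indicator ({0<..} \<times> {0<..} \<times> {0<..}) p * RSB_mixture_integrand a b u p) \<partial>lborel)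
     = ennreal (ln (1 + u) powr (a - 1) / (1 + u) * (1 / (1 + ln (1 + u)) powr (a + b)))"
proof -
  define L where "L = ln (1 + u)"
  have L: "0 < L" unfolding L_def using u by simp
  define A where "A x = ennreal (1 / ((1 + u) * Gamma (1 - a))
                    * (indicator {0<..} x * x powr ((1 - a) - 1) * exp (- L * x)))" for x :: real
  define B where "B y = ennreal (1 / Gamma (a + b)
                    * (indicator {0<..} y * y powr ((a + b) - 1) * exp (- (1 + L) * y)))" for y :: real
  have "(\<integral>\<^sup>+p. ennreal (indicator ({0<..} \<times> {0<..} \<times> {0<..}) p * RSB_mixture_integrand a b u p) \<partial>lborel)
      = (\<integral>\<^sup>+w. \<integral>\<^sup>+v. ennreal (indicator ({0<..} \<times> {0<..} \<times> {0<..}) (v, w)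
                                     * RSB_mixture_integrand a b u (v, w)) \<partial>lborel \<partial>lborel)"
    by (rule nn_integral_lborel_pair) measurable
  also have "\<dots> = (\<integral>\<^sup>+w. A (fst w) * B (snd w) \<partial>lborel)"
  proof (intro nn_integral_cong)
    fix w :: "real \<times> real"
    obtain x y where w: "w = (x, y)" by (cases w)
    show "(\<integral>\<^sup>+v. ennreal (indicator ({0<..} \<times> {0<..} \<times> {0<..}) (v, w)
                        * RSB_mixture_integrand a b u (v, w)) \<partial>lborel) = A (fst w) * B (snd w)"
    proof (cases "0 < x \<and> 0 < y")
      case True
      then have "(\<integral>\<^sup>+v. ennreal (indicator ({0<..} \<times> {0<..} \<times> {0<..}) (v, w)
                        * RSB_mixture_integrand a b u (v, w)) \<partial>lborel)
          = (\<integral>\<^sup>+v. ennreal (indicator {0<..} v * RSB_mixture_integrand a b u (v, x, y)) \<partial>lborel)"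
        unfolding w by (intro nn_integral_cong) (simp add: indicator_def)
      also have "\<dots> = A x * B y"
        using nn_integral_RSB_mixture_integrand_fst[OF ab, of u x y] True u
        unfolding A_def B_def L_def by (simp add: mult.commute)
      finally show ?thesis
        unfolding w by simp
    qed (auto simp: w A_def B_def indicator_def)
  qed
  also have "\<dots> = (\<integral>\<^sup>+x. A x \<partial>lborel) * (\<integral>\<^sup>+y. B y \<partial>lborel)"
    by (rule nn_integral_lborel_pair_mult) (simp_all add: A_def B_def)
  also have "\<dots> = ennreal (1 / ((1 + u) * Gamma (1 - a)) * (Gamma (1 - a) / L powr (1 - a)))
                  * ennreal (1 / Gamma (a + b) * (Gamma (a + b) / (1 + L) powr (a + b)))"
    unfolding A_def B_def using ab u L
    by (subst (1 2) nn_integral_cmult_powr_exp_eq_Gamma) auto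
  also have "\<dots> = ennreal (L powr (a - 1) / (1 + u) * (1 / (1 + L) powr (a + b)))"
    using ab u L
    by (simp add: ennreal_mult'[symmetric] powr_diff powr_minus_divide Gamma_real_pos[THEN less_imp_not_eq2])
  finally show ?thesis
    unfolding L_def .
qed

lemma has_bochner_integral_RSB_mixture_integrand:
  fixes a b u :: real
  assumes "a < 1" "0 < a + b" "0 < u"
  shows "has_bochner_integral lborel
           (\<lambda>p. indicator ({0<..} \<times> {0<..} \<times> {0<..}) p * RSB_mixture_integrand a b u p)
           (ln (1 + u) powr (a - 1) / (1 + u) * (1 / (1 + ln (1 + u)) powr (a + b)))"
proof (rule has_bochner_integral_nn_integral)
  show "AE p in lborel. 0 \<le> indicator ({0<..} \<times> {0<..} \<times> {0<..}) p * RSB_mixture_integrand a b u p"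
    using assms by (auto simp: indicator_def RSB_mixture_integrand_nonneg)
qed (use assms in \<open>simp_all add: nn_integral_RSB_mixture_integrand\<close>)

lemma Ex_Ga_g_mix_eq_RSB_mixture_integrand:
  fixes a b u v x y :: real
  assumes "a < 1" "0 < a + b" "0 < v" "0 < x" "0 < y"
  shows "Ex_density u v * Ga_density v (x + y) 1 * g_mix a b x y
           = RSB_mixture_integrand a b u (v, x, y) / Beta a b"
proof (cases "Beta a b = 0")
  case False
  have "Gamma (x + y + 1) = (x + y) * Gamma (x + y)"
    using assms by (intro Gamma_plus1) (auto elim: nonpos_Ints_cases)
  moreover have "v powr (x + y) = v * v powr (x + y - 1)"
    using assms by (simp add: powr_diff)
  moreover have "Gamma (x + y) \<noteq> 0" "Gamma (1 - a) \<noteq> 0" "Gamma (a + b) \<noteq> 0"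
    using assms by (auto simp: Gamma_real_pos[THEN less_imp_not_eq2])
  ultimately show ?thesis
    using assms False
    by (simp add: Ex_density_def Ga_density_def g_mix_def RSB_mixture_integrand_def
                  exp_minus field_simps)
qed (simp add: g_mix_def)

theorem theorem1:
  fixes a b u :: real
  assumes "0 < a" "a < 1" "0 < b" "0 < u"
  shows "RSB_density a b u =
           (1 / Beta a b) *
           (\<integral>p \<in> {0<..} \<times> {0<..} \<times> {0<..}. (\<lambda>(v::real, x::real, y::real).
              exp (- v * u) * (v powr (x + y) * exp (- v) / Gamma (x + y + 1))
              * (x powr (- a) / Gamma (1 - a))
              * (y powr (a + b - 1) * exp (- y) / Gamma (a + b))) p \<partial>lborel)
       \<and> RSB_density a b u =
           (\<integral>p \<in> {0<..} \<times> {0<..} \<times> {0<..}. (\<lambda>(v::real, x::real, y::real).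
              Ex_density u v * Ga_density v (x + y) 1 * g_mix a b x y) p \<partial>lborel)"
proof -
  define S where "S = ({0<..} \<times> {0<..} \<times> {0<..} :: (real \<times> real \<times> real) set)"
  define K where "K = ln (1 + u) powr (a - 1) / (1 + u) * (1 / (1 + ln (1 + u)) powr (a + b))"
  have "has_bochner_integral lborel (\<lambda>p. indicator S p * RSB_mixture_integrand a b u p) K"
    unfolding S_def K_def using assms by (intro has_bochner_integral_RSB_mixture_integrand) auto
  then have I: "(\<integral>p. indicator S p * RSB_mixture_integrand a b u p \<partial>lborel) = K"
    by (rule has_bochner_integral_integral_eq)
  have "(\<integral>p \<in> S. (\<lambda>(v, x, y). Ex_density u v * Ga_density v (x + y) 1 * g_mix a b x y) p \<partial>lborel)
      = (\<integral>p. indicator S p * RSB_mixture_integrand a b u p / Beta a b \<partial>lborel)"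
    unfolding set_lebesgue_integral_def using assms
    by (intro Bochner_Integration.integral_cong)
       (auto simp: S_def indicator_def Ex_Ga_g_mix_eq_RSB_mixture_integrand)
  also have "\<dots> = K / Beta a b"
    using I by simp
  finally have J: "(\<integral>p \<in> S. (\<lambda>(v, x, y). Ex_density u v * Ga_density v (x + y) 1 * g_mix a b x y) p \<partial>lborel)
      = K / Beta a b" .
  have "RSB_density a b u = K / Beta a b"
    unfolding RSB_density_def K_def by simp
  with I J show ?thesis
    unfolding S_def set_lebesgue_integral_def RSB_mixture_integrand_def by simp
qed

end
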